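(* Let $N\ge1$ and let $\mathbf X=(X_t)_{t\in I}$ be a real Markov process that is $N$-TLI and $N$-MSC. Then $\mathbf X$ is $N$-MPR if and only if there exist $N$ martingales $(\mathcal M_i(t),\mathcal F_{\le t})_{t\in I}$, $i=1,\dots,N$, such that each $\mathcal M_i(t)$ is a polynomial in $X_t$ of degree $i$ (with coefficients depending on $t$). More precisely: if $\mathbf X$ is $N$-MPR with structural matrix $V_N(t)$, then the entries of the vector $V_N^{-1}(t)X_t^{(N)}$ are polynomial martingales with respect to $(\mathcal F_{\le t})$; conversely, if $W_N(t)$ is a non-singular lower triangular matrix such that the entries of $W_N(t)X_t^{(N)}$ are martingales with respect to $(\mathcal F_{\le t})$, then $E(X_t^{(N)}\mid\mathcal F_{\le s})=W_N^{-1}(t)W_N(s)X_s^{(N)}$ for $s\le t$, so $\mathbf X$ is $N$-MPR and $V_N(t)=W_N^{-1}(t)$ is a structural matrix of $\mathbf X$.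
   Context: $I=[l,r]$ is a finite or infinite segment of the real line. $\mathbf X$ has $E|X_t|^n<\infty$ for all $n$, $t$, and the support of the law of each $X_t$ is infinite. $\mathcal F_{\le s}=\sigma(X_v:v\in[l,s])$. $N$-TLI: for every $0<n\le N$ and $s\ne t$ in $I$, $[\operatorname{cov}(X_t^i,X_s^j)]_{i,j=1}^n$ is non-singular. $N$-MSC: $(t,s)\mapsto EX_t^mX_s^j$ is continuous at least on the diagonal for $m,j\le N$. $N$-MPR: Markov, $N$-TLI, $N$-MSC, and for $1\le n\le N$, $s\le t$, $E(X_t^n\mid\mathcal F_{\le s})=\sum_{k=0}^n\gamma_{n,k}(s,t)X_s^k$ a.s.; with $\gamma_{0,0}=1$, $\gamma_{i,j}=0$ for $j>i$, set $\mathcal A_N(s,t)=[\gamma_{i,j}(s,t)]_{i,j=0}^N$, so $E(X_t^{(N)}\mid\mathcal F_{\le s})=\mathcal A_N(s,t)X_s^{(N)}$ with $X_t^{(N)}=(1,X_t,\dots,X_t^N)^T$. A structural matrix of an $N$-MPR process is any family $\{V_N(t)\}_{t\in I}$ of non-singular lower triangular $(N+1)\times(N+1)$ matrices with $\mathcal A_N(s,u)=V_N(u)V_N^{-1}(s)$ for all $s\le u$. *)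

theory Defs
  imports "HOL-Probability.Probability" "Jordan_Normal_Form.Gauss_Jordan_Elimination"
    "Jordan_Normal_Form.Determinant"
begin

definition gen_sigma :: "'a measure \<Rightarrow> (real \<Rightarrow> 'a \<Rightarrow> real) \<Rightarrow> real set \<Rightarrow> 'a measure" where
  "gen_sigma M X J = sigma (space M) {X v -` A \<inter> space M | v A. v \<in> J \<and> A \<in> sets borel}"

definition past :: "'a measure \<Rightarrow> real set \<Rightarrow> (real \<Rightarrow> 'a \<Rightarrow> real) \<Rightarrow> real \<Rightarrow> 'a measure" where
  "past M I X s = gen_sigma M X {v \<in> I. v \<le> s}"

definition law_support :: "'a measure \<Rightarrow> (real \<Rightarrow> 'a \<Rightarrow> real) \<Rightarrow> real \<Rightarrow> real set" where
  "law_support M X t = {x. \<forall>e>0. measure M {\<omega> \<in> space M. \<bar>X t \<omega> - x\<bar> < e} > 0}"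

definition standing :: "'a measure \<Rightarrow> real set \<Rightarrow> (real \<Rightarrow> 'a \<Rightarrow> real) \<Rightarrow> bool" where
  "standing M I X \<longleftrightarrow> prob_space M \<and> is_interval I \<and>
     (\<forall>t\<in>I. X t \<in> borel_measurable M) \<and>
     (\<forall>t\<in>I. \<forall>n::nat. integrable M (\<lambda>\<omega>. \<bar>X t \<omega>\<bar> ^ n)) \<and>
     (\<forall>t\<in>I. infinite (law_support M X t))"

definition markov :: "'a measure \<Rightarrow> real set \<Rightarrow> (real \<Rightarrow> 'a \<Rightarrow> real) \<Rightarrow> bool" where
  "markov M I X \<longleftrightarrow> (\<forall>s\<in>I. \<forall>t\<in>I. s \<le> t \<longrightarrow> (\<forall>A \<in> sets borel.
     AE \<omega> in M. real_cond_exp M (past M I X s) (\<lambda>\<omega>. indicator A (X t \<omega>)) \<omega>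
               = real_cond_exp M (gen_sigma M X {s}) (\<lambda>\<omega>. indicator A (X t \<omega>)) \<omega>))"

definition cov :: "'a measure \<Rightarrow> ('a \<Rightarrow> real) \<Rightarrow> ('a \<Rightarrow> real) \<Rightarrow> real" where
  "cov M f g = integral\<^sup>L M (\<lambda>\<omega>. f \<omega> * g \<omega>) - integral\<^sup>L M f * integral\<^sup>L M g"

definition TLI :: "nat \<Rightarrow> 'a measure \<Rightarrow> real set \<Rightarrow> (real \<Rightarrow> 'a \<Rightarrow> real) \<Rightarrow> bool" where
  "TLI N M I X \<longleftrightarrow> (\<forall>n. 0 < n \<and> n \<le> N \<longrightarrow> (\<forall>s\<in>I. \<forall>t\<in>I. s \<noteq> t \<longrightarrow>
     det (mat n n (\<lambda>(i,j). cov M (\<lambda>\<omega>. X t \<omega> ^ (i+1)) (\<lambda>\<omega>. X s \<omega> ^ (j+1)))) \<noteq> 0))"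

definition MSC :: "nat \<Rightarrow> 'a measure \<Rightarrow> real set \<Rightarrow> (real \<Rightarrow> 'a \<Rightarrow> real) \<Rightarrow> bool" where
  "MSC N M I X \<longleftrightarrow> (\<forall>m\<le>N. \<forall>j\<le>N. \<forall>t\<in>I.
     continuous (at (t,t) within I \<times> I)
       (\<lambda>(u,v). integral\<^sup>L M (\<lambda>\<omega>. X u \<omega> ^ m * X v \<omega> ^ j)))"

definition poly_reg :: "nat \<Rightarrow> 'a measure \<Rightarrow> real set \<Rightarrow> (real \<Rightarrow> 'a \<Rightarrow> real)
    \<Rightarrow> (nat \<Rightarrow> nat \<Rightarrow> real \<Rightarrow> real \<Rightarrow> real) \<Rightarrow> bool" where
  "poly_reg N M I X \<gamma> \<longleftrightarrow> (\<forall>n. 1 \<le> n \<and> n \<le> N \<longrightarrow> (\<forall>s\<in>I. \<forall>t\<in>I. s \<le> t \<longrightarrow>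
     (AE \<omega> in M. real_cond_exp M (past M I X s) (\<lambda>\<omega>. X t \<omega> ^ n) \<omega>
                 = (\<Sum>k\<le>n. \<gamma> n k s t * X s \<omega> ^ k))))"

definition MPR :: "nat \<Rightarrow> 'a measure \<Rightarrow> real set \<Rightarrow> (real \<Rightarrow> 'a \<Rightarrow> real) \<Rightarrow> bool" where
  "MPR N M I X \<longleftrightarrow> markov M I X \<and> TLI N M I X \<and> MSC N M I X \<and> (\<exists>\<gamma>. poly_reg N M I X \<gamma>)"

definition A_mat :: "nat \<Rightarrow> (nat \<Rightarrow> nat \<Rightarrow> real \<Rightarrow> real \<Rightarrow> real) \<Rightarrow> real \<Rightarrow> real \<Rightarrow> real mat" where
  "A_mat N \<gamma> s t = mat (N+1) (N+1) (\<lambda>(i,j).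
     if i = 0 then (if j = 0 then 1 else 0) else if i < j then 0 else \<gamma> i j s t)"

definition lower_tri :: "real mat \<Rightarrow> bool" where
  "lower_tri A \<longleftrightarrow> (\<forall>i<dim_row A. \<forall>j<dim_col A. i < j \<longrightarrow> A $$ (i,j) = 0)"

definition minv :: "real mat \<Rightarrow> real mat" where
  "minv A = the (mat_inverse A)"

definition nonsing_lt_family :: "nat \<Rightarrow> real set \<Rightarrow> (real \<Rightarrow> real mat) \<Rightarrow> bool" where
  "nonsing_lt_family N I V \<longleftrightarrow> (\<forall>t\<in>I. V t \<in> carrier_mat (N+1) (N+1) \<and> lower_tri (V t) \<and> det (V t) \<noteq> 0)"

definition structural_matrix :: "nat \<Rightarrow> 'a measure \<Rightarrow> real set \<Rightarrow> (real \<Rightarrow> 'a \<Rightarrow> real)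
    \<Rightarrow> (real \<Rightarrow> real mat) \<Rightarrow> bool" where
  "structural_matrix N M I X V \<longleftrightarrow> nonsing_lt_family N I V \<and>
     (\<exists>\<gamma>. poly_reg N M I X \<gamma> \<and>
        (\<forall>s\<in>I. \<forall>u\<in>I. s \<le> u \<longrightarrow> A_mat N \<gamma> s u = V u * minv (V s)))"

definition Xvec :: "nat \<Rightarrow> (real \<Rightarrow> 'a \<Rightarrow> real) \<Rightarrow> real \<Rightarrow> 'a \<Rightarrow> real vec" where
  "Xvec N X t \<omega> = vec (N+1) (\<lambda>k. X t \<omega> ^ k)"

definition martingale :: "'a measure \<Rightarrow> real set \<Rightarrow> (real \<Rightarrow> 'a \<Rightarrow> real) \<Rightarrow> (real \<Rightarrow> 'a \<Rightarrow> real) \<Rightarrow> bool" where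
  "martingale M I X Y \<longleftrightarrow>
     (\<forall>t\<in>I. integrable M (Y t) \<and> Y t \<in> borel_measurable (past M I X t)) \<and>
     (\<forall>s\<in>I. \<forall>t\<in>I. s \<le> t \<longrightarrow> (AE \<omega> in M. real_cond_exp M (past M I X s) (Y t) \<omega> = Y s \<omega>))"

end

theory Submission
  imports Defs
begin

text \<open>
  Under polynomial regression, the tower property gives the regression matrices
  A(s,t) the cocycle relations A(s,s) = 1 and A(s,u) = A(t,u) A(s,t): two polynomials in
  X_s that agree almost surely have the same coefficients, because the law of X_s has
  infinite support. TLI makes every A(s,t) invertible: the matrix
  [cov(X_t^i, X_s^j)]_{i,j=1..n} is the product of the triangular block
  [A(s,t)_{i,k}]_{i,k=1..n} with [cov(X_s^k, X_s^j)]_{k,j=1..n}, so the diagonal entries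
  of A(s,t) cannot vanish. Fixing t0, the matrices V(t) = A(t0,t) for t \<ge> t0 and
  V(t) = A(t,t0)^-1 for t < t0 then form a structural matrix, and the entries of V(t)^-1 X_t^(N) are martingales because
  V(t)^-1 A(s,t) = V(s)^-1. Conversely, if the entries of W(t) X_t^(N) are martingales,
  then E(X_t^(N) | F_s) = W(t)^-1 E(W(t) X_t^(N) | F_s) = W(t)^-1 W(s) X_s^(N), which is
  the regression property with A(s,t) = W(t)^-1 W(s).
\<close>

section \<open>Matrices\<close>

lemma minv_inverse_mat:
  fixes A :: "real mat"
  assumes A: "A \<in> carrier_mat n n" and det: "det A \<noteq> 0"
  shows minv_carrier_mat: "minv A \<in> carrier_mat n n"
    and mult_minv_right: "A * minv A = 1\<^sub>m n"
    and mult_minv_left: "minv A * A = 1\<^sub>m n"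
proof -
  have "mat_inverse A \<noteq> None"
    using det_non_zero_imp_unit[OF A det, of "()"] mat_inverse(1)[OF A, of "()"] by blast
  then obtain B where B: "mat_inverse A = Some B" by auto
  then have "minv A = B" by (simp add: minv_def)
  with mat_inverse(2)[OF A B]
  show "minv A \<in> carrier_mat n n" "A * minv A = 1\<^sub>m n" "minv A * A = 1\<^sub>m n" by auto
qed

lemma det_minv_nonzero:
  fixes A :: "real mat"
  assumes A: "A \<in> carrier_mat n n" and det: "det A \<noteq> 0"
  shows "det (minv A) \<noteq> 0"
  using det_mult[OF A minv_carrier_mat[OF A det]] mult_minv_right[OF A det] by auto

lemma minv_eqI:
  fixes A B :: "real mat"
  assumes A: "A \<in> carrier_mat n n" and det: "det A \<noteq> 0" and B: "B \<in> carrier_mat n n"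
    and BA: "B * A = 1\<^sub>m n"
  shows "minv A = B"
proof -
  have "B = (B * A) * minv A"
    using assoc_mult_mat[OF B A minv_carrier_mat[OF A det]] mult_minv_right[OF A det] B by simp
  then show ?thesis
    using BA minv_carrier_mat[OF A det] by simp
qed

lemma minv_minv:
  fixes A :: "real mat"
  assumes A: "A \<in> carrier_mat n n" and det: "det A \<noteq> 0"
  shows "minv (minv A) = A"
  by (rule minv_eqI[OF minv_carrier_mat[OF A det] det_minv_nonzero[OF A det] A mult_minv_right[OF A det]])

lemma minv_mult_cancel_left:
  fixes A B :: "real mat"
  assumes A: "A \<in> carrier_mat n n" and det: "det A \<noteq> 0" and B: "B \<in> carrier_mat n m"
  shows "minv A * (A * B) = B"
  using assoc_mult_mat[OF minv_carrier_mat[OF A det] A B] mult_minv_left[OF A det] B by simp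

lemma mult_minv_cancel_right:
  fixes A B :: "real mat"
  assumes A: "A \<in> carrier_mat n n" and det: "det A \<noteq> 0" and B: "B \<in> carrier_mat m n"
  shows "B * A * minv A = B"
  using assoc_mult_mat[OF B A minv_carrier_mat[OF A det]] mult_minv_right[OF A det] B by simp

lemma index_mult_mat_sum:
  fixes A B :: "'a::comm_semiring_0 mat"
  assumes "A \<in> carrier_mat m n" "B \<in> carrier_mat n p" "i < m" "j < p"
  shows "(A * B) $$ (i,j) = (\<Sum>k<n. A $$ (i,k) * B $$ (k,j))"
  using assms by (simp add: scalar_prod_def atLeast0LessThan)

lemma index_mult_mat_vec_sum:
  fixes B :: "'a::comm_semiring_0 mat"
  assumes "B \<in> carrier_mat m n" "i < m" "dim_vec v = n"
  shows "(B *\<^sub>v v) $ i = (\<Sum>k<n. B $$ (i,k) * v $ k)"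
  using assms by (simp add: scalar_prod_def atLeast0LessThan)

lemma lower_triD:
  "lower_tri A \<Longrightarrow> A \<in> carrier_mat n n \<Longrightarrow> i < j \<Longrightarrow> j < n \<Longrightarrow> A $$ (i,j) = 0"
  by (auto simp: lower_tri_def)

lemma index_mult_lower_tri_vec:
  assumes B: "B \<in> carrier_mat n n" and L: "lower_tri B" and i: "i < n"
  shows "(B *\<^sub>v vec n f) $ i = (\<Sum>k\<le>i. B $$ (i,k) * f k)"
proof -
  have "(B *\<^sub>v vec n f) $ i = (\<Sum>k<n. B $$ (i,k) * f k)"
    using index_mult_mat_vec_sum[OF B i] by simp
  also have "\<dots> = (\<Sum>k\<le>i. B $$ (i,k) * f k)"
    by (rule sum.mono_neutral_right) (use i lower_triD[OF L B] in auto)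
  finally show ?thesis .
qed

lemma det_lower_tri:
  fixes A :: "real mat"
  assumes A: "A \<in> carrier_mat n n" and L: "lower_tri A"
  shows "det A = (\<Prod>i<n. A $$ (i,i))"
proof -
  have "det A = prod_list (diag_mat A)"
    by (rule det_lower_triangular[OF _ A]) (use L A in \<open>auto simp: lower_tri_def\<close>)
  also have "\<dots> = (\<Prod>i<n. A $$ (i,i))"
    using A by (simp add: prod_list_diag_prod atLeast0LessThan)
  finally show ?thesis .
qed

lemma det_lower_tri_nonzero_iff:
  fixes A :: "real mat"
  assumes "A \<in> carrier_mat n n" "lower_tri A"
  shows "det A \<noteq> 0 \<longleftrightarrow> (\<forall>i<n. A $$ (i,i) \<noteq> 0)"
  using det_lower_tri[OF assms] by force

lemma lower_tri_mult:
  fixes A B :: "real mat"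
  assumes A: "A \<in> carrier_mat n n" and B: "B \<in> carrier_mat n n"
    and LA: "lower_tri A" and LB: "lower_tri B"
  shows "lower_tri (A * B)"
  unfolding lower_tri_def
proof (intro allI impI)
  fix i j assume "i < dim_row (A * B)" "j < dim_col (A * B)" and ij: "i < j"
  then have i: "i < n" and j: "j < n" using A B by auto
  have vanish: "A $$ (i,k) * B $$ (k,j) = 0" if "k < n" for k
    using ij that lower_triD[OF LA A, of i k] lower_triD[OF LB B, of k j] j
    by (cases "i < k") auto
  have "(A * B) $$ (i,j) = (\<Sum>k<n. A $$ (i,k) * B $$ (k,j))"
    by (rule index_mult_mat_sum[OF A B i j])
  also have "\<dots> = 0"
    using vanish by (intro sum.neutral) auto
  finally show "(A * B) $$ (i,j) = 0" .
qed

lemma lower_tri_minv: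
  fixes A :: "real mat"
  assumes A: "A \<in> carrier_mat n n" and L: "lower_tri A" and det: "det A \<noteq> 0"
  shows "lower_tri (minv A)"
proof -
  let ?B = "minv A"
  have B: "?B \<in> carrier_mat n n" using minv_carrier_mat[OF A det] .
  have "?B $$ (i,j) = 0" if "i < j" "j < n" for i j
    using that
  proof (induction i arbitrary: j rule: less_induct)
    case (less i)
    \<comment> \<open>in row i of A * B = 1 only the diagonal term of A survives, by the induction hypothesis\<close>
    have "A $$ (i,k) * ?B $$ (k,j) = 0" if "k < n" "k \<noteq> i" for k
      using that less lower_triD[OF L A, of i k] by (cases "i < k") auto
    then have "(A * ?B) $$ (i,j) = A $$ (i,i) * ?B $$ (i,j)"
      using index_mult_mat_sum[OF A B, of i j] less.prems
      by (simp add: sum.remove[of _ i] sum.neutral)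
    moreover have "(A * ?B) $$ (i,j) = 0"
      using mult_minv_right[OF A det] less.prems by simp
    moreover have "A $$ (i,i) \<noteq> 0"
      using det det_lower_tri_nonzero_iff[OF A L] less.prems by simp
    ultimately show ?case by simp
  qed
  then show ?thesis using B by (auto simp: lower_tri_def)
qed
lemma cocycle_factorization:
  fixes A :: "real \<Rightarrow> real \<Rightarrow> real mat"
  assumes carrier: "\<And>s t. A s t \<in> carrier_mat (N+1) (N+1)"
    and lower: "\<And>s t. lower_tri (A s t)"
    and det: "\<And>s t. s \<in> I \<Longrightarrow> t \<in> I \<Longrightarrow> s \<le> t \<Longrightarrow> det (A s t) \<noteq> 0"
    and cocycle: "\<And>s t u. s \<in> I \<Longrightarrow> t \<in> I \<Longrightarrow> u \<in> I \<Longrightarrow> s \<le> t \<Longrightarrow> t \<le> u \<Longrightarrow>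
      A s u = A t u * A s t"
  shows "\<exists>V. nonsing_lt_family N I V \<and> (\<forall>s\<in>I. \<forall>u\<in>I. s \<le> u \<longrightarrow> A s u = V u * minv (V s))"
proof (cases "I = {}")
  case True
  then show ?thesis by (simp add: nonsing_lt_family_def)
next
  case False
  then obtain t0 where t0: "t0 \<in> I" by auto
  define V where "V t = (if t0 \<le> t then A t0 t else minv (A t t0))" for t
  have "V t \<in> carrier_mat (N+1) (N+1) \<and> lower_tri (V t) \<and> det (V t) \<noteq> 0" if t: "t \<in> I" for t
  proof (cases "t0 \<le> t")
    case True
    then show ?thesis
      using det[OF t0 t True] carrier lower by (simp add: V_def)
  next
    case False
    then have "det (A t t0) \<noteq> 0" using det[OF t t0] by simp
    with False show ?thesis
      using minv_carrier_mat[OF carrier] lower_tri_minv[OF carrier lower] det_minv_nonzero[OF carrier]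
      by (simp add: V_def)
  qed
  then have "nonsing_lt_family N I V"
    by (simp add: nonsing_lt_family_def)
  moreover have "A s u = V u * minv (V s)" if s: "s \<in> I" and u: "u \<in> I" and su: "s \<le> u" for s u
  proof (cases "t0 \<le> s")
    case True
    then show ?thesis
      using cocycle[OF t0 s u True su] mult_minv_cancel_right[OF carrier det[OF t0 s True] carrier] su
      by (simp add: V_def)
  next
    case False
    then have minv_Vs: "minv (V s) = A s t0"
      using minv_minv[OF carrier det[OF s t0]] by (simp add: V_def)
    show ?thesis
    proof (cases "t0 \<le> u")
      case True
      then show ?thesis
        using minv_Vs cocycle[OF s t0 u _ True] False by (simp add: V_def)
    next
      case False
      then show ?thesis
        using minv_Vs cocycle[OF s u t0 su] minv_mult_cancel_left[OF carrier det[OF u t0] carrier]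
        by (simp add: V_def)
    qed
  qed
  ultimately show ?thesis by blast
qed

lemma Xvec_carrier: "Xvec N X t \<omega> \<in> carrier_vec (N+1)"
  by (simp add: Xvec_def)

lemma index_mult_Xvec:
  fixes B :: "real mat"
  assumes "B \<in> carrier_mat m (N+1)" "i < m"
  shows "(B *\<^sub>v Xvec N X t \<omega>) $ i = (\<Sum>k\<le>N. B $$ (i,k) * X t \<omega> ^ k)"
  using index_mult_mat_vec_sum[OF assms, of "Xvec N X t \<omega>"]
  by (simp add: Xvec_def lessThan_Suc_atMost)

section \<open>The natural filtration and conditional expectations\<close>

lemma sets_gen_sigma:
  "sets (gen_sigma M X J) = sigma_sets (space M) {X v -` A \<inter> space M | v A. v \<in> J \<and> A \<in> sets borel}"
  unfolding gen_sigma_def by (rule sets_measure_of) auto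

lemma space_gen_sigma [simp]: "space (gen_sigma M X J) = space M"
  unfolding gen_sigma_def by (rule space_measure_of) auto

lemma measurable_gen_sigma:
  assumes "v \<in> J"
  shows "X v \<in> borel_measurable (gen_sigma M X J)"
proof (rule measurableI)
  fix A :: "real set" assume "A \<in> sets borel"
  then show "X v -` A \<inter> space (gen_sigma M X J) \<in> sets (gen_sigma M X J)"
    using assms unfolding sets_gen_sigma by auto
qed simp

lemma subalgebra_gen_sigma:
  assumes "\<And>v. v \<in> J \<Longrightarrow> X v \<in> borel_measurable M"
  shows "subalgebra M (gen_sigma M X J)"
  unfolding subalgebra_def
proof
  show "sets (gen_sigma M X J) \<subseteq> sets M"
    unfolding sets_gen_sigma
    by (rule sets.sigma_sets_subset) (use assms in \<open>blast intro!: measurable_sets\<close>)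
qed simp

lemma subalgebra_gen_sigma_mono:
  assumes "J \<subseteq> K"
  shows "subalgebra (gen_sigma M X K) (gen_sigma M X J)"
  unfolding subalgebra_def
proof
  have "{X v -` A \<inter> space M | v A. v \<in> J \<and> A \<in> sets borel} \<subseteq> sets (gen_sigma M X K)"
  proof clarify
    fix v and A :: "real set" assume "v \<in> J" "A \<in> sets borel"
    with assms show "X v -` A \<inter> space M \<in> sets (gen_sigma M X K)"
      using measurable_sets[OF measurable_gen_sigma[of v K] \<open>A \<in> sets borel\<close>] by auto
  qed
  from sets.sigma_sets_subset[OF this]
  show "sets (gen_sigma M X J) \<subseteq> sets (gen_sigma M X K)"
    unfolding sets_gen_sigma[of M X J] by simp
qed simp

lemma measurable_past: "v \<in> I \<Longrightarrow> v \<le> s \<Longrightarrow> X v \<in> borel_measurable (past M I X s)"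
  unfolding past_def by (rule measurable_gen_sigma) simp

lemma subalgebra_past_mono: "s \<le> t \<Longrightarrow> subalgebra (past M I X t) (past M I X s)"
  unfolding past_def by (rule subalgebra_gen_sigma_mono) auto

lemma martingale_cong:
  assumes "martingale M I X Y" "\<And>t \<omega>. t \<in> I \<Longrightarrow> Y t \<omega> = Y' t \<omega>"
  shows "martingale M I X Y'"
proof -
  have "Y t = Y' t" if "t \<in> I" for t using assms(2) that by auto
  then show ?thesis using assms(1) unfolding martingale_def by auto
qed

lemma (in sigma_finite_subalgebra) real_cond_exp_mult_mat_vec:
  fixes B :: "real mat"
  assumes B: "B \<in> carrier_mat m n" and f: "\<And>j. j < n \<Longrightarrow> integrable M (f j)" and i: "i < m"
  shows "AE \<omega> in M. real_cond_exp M F (\<lambda>\<omega>. (B *\<^sub>v vec n (\<lambda>j. f j \<omega>)) $ i) \<omega>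
                   = (B *\<^sub>v vec n (\<lambda>j. real_cond_exp M F (f j) \<omega>)) $ i"
proof -
  \<comment> \<open>padding by zero makes every summand integrable, as required by \<open>real_cond_exp_sum\<close>\<close>
  define g where "g j = (if j < n then (\<lambda>\<omega>. B $$ (i,j) * f j \<omega>) else (\<lambda>_. 0))" for j
  have "integrable M (g j)" for j
    using f by (simp add: g_def)
  then have sum: "AE \<omega> in M. real_cond_exp M F (\<lambda>\<omega>. \<Sum>j<n. g j \<omega>) \<omega> = (\<Sum>j<n. real_cond_exp M F (g j) \<omega>)"
    by (rule real_cond_exp_sum)
  have "AE \<omega> in M. \<forall>j\<in>{..<n}. real_cond_exp M F (g j) \<omega> = B $$ (i,j) * real_cond_exp M F (f j) \<omega>"
    using f by (intro eventually_ball_finite) (auto simp: g_def)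
  with sum show ?thesis
  proof eventually_elim
    case (elim \<omega>)
    have "(\<lambda>\<omega>. (B *\<^sub>v vec n (\<lambda>j. f j \<omega>)) $ i) = (\<lambda>\<omega>. \<Sum>j<n. g j \<omega>)"
      using index_mult_mat_vec_sum[OF B i] by (auto simp: g_def intro!: sum.cong)
    with elim show ?case
      using index_mult_mat_vec_sum[OF B i] by simp
  qed
qed

section \<open>Processes with moments of all orders and infinite support\<close>

locale standing_process =
  fixes M :: "'a measure" and I :: "real set" and X :: "real \<Rightarrow> 'a \<Rightarrow> real"
  assumes standing: "standing M I X"
begin

sublocale prob_space M
  using standing by (simp add: standing_def)

lemma borel_measurable_X: "t \<in> I \<Longrightarrow> X t \<in> borel_measurable M"
  using standing by (simp add: standing_def)

lemma integrable_X_power: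
  assumes t: "t \<in> I"
  shows "integrable M (\<lambda>\<omega>. X t \<omega> ^ n)"
proof -
  have "(\<lambda>\<omega>. X t \<omega> ^ n) \<in> borel_measurable M"
    using borel_measurable_X[OF t] by measurable
  moreover have "integrable M (\<lambda>\<omega>. \<bar>X t \<omega>\<bar> ^ n)"
    using standing t by (simp add: standing_def)
  ultimately show ?thesis
    by (simp add: integrable_abs_iff[symmetric] power_abs)
qed

lemma integrable_X_power_mult:
  assumes t: "t \<in> I" and s: "s \<in> I"
  shows "integrable M (\<lambda>\<omega>. X t \<omega> ^ a * X s \<omega> ^ b)"
proof (rule Bochner_Integration.integrable_bound)
  show "integrable M (\<lambda>\<omega>. X t \<omega> ^ (2*a) + X s \<omega> ^ (2*b))"
    using integrable_X_power[OF t] integrable_X_power[OF s] by auto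
  show "(\<lambda>\<omega>. X t \<omega> ^ a * X s \<omega> ^ b) \<in> borel_measurable M"
    using borel_measurable_X[OF t] borel_measurable_X[OF s] by measurable
  show "AE \<omega> in M. norm (X t \<omega> ^ a * X s \<omega> ^ b) \<le> norm (X t \<omega> ^ (2*a) + X s \<omega> ^ (2*b))"
  proof (rule AE_I2)
    fix \<omega>
    let ?p = "X t \<omega> ^ a" and ?q = "X s \<omega> ^ b"
    have "2 * (\<bar>?p\<bar> * \<bar>?q\<bar>) \<le> ?p\<^sup>2 + ?q\<^sup>2"
      using sum_squares_bound[of "\<bar>?p\<bar>" "\<bar>?q\<bar>"] by (simp add: mult.assoc)
    moreover have "0 \<le> \<bar>?p\<bar> * \<bar>?q\<bar>" by simp
    ultimately have "\<bar>?p * ?q\<bar> \<le> ?p\<^sup>2 + ?q\<^sup>2"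
      unfolding abs_mult by linarith
    moreover have "X t \<omega> ^ (2*a) = ?p\<^sup>2" "X s \<omega> ^ (2*b) = ?q\<^sup>2"
      by (simp_all add: power_mult mult.commute)
    ultimately show "norm (?p * ?q) \<le> norm (X t \<omega> ^ (2*a) + X s \<omega> ^ (2*b))"
      by simp
  qed
qed

lemma subalgebra_past: "subalgebra M (past M I X s)"
  unfolding past_def by (rule subalgebra_gen_sigma) (auto intro: borel_measurable_X)

lemma sigma_finite_subalgebra_past: "sigma_finite_subalgebra M (past M I X s)"
  by (intro finite_measure_subalgebra_is_sigma_finite)
    (simp add: finite_measure_subalgebra_def finite_measure_subalgebra_axioms_def
      subalgebra_past finite_measure)

lemma cond_exp_past_const: "AE \<omega> in M. real_cond_exp M (past M I X s) (\<lambda>\<omega>. c) \<omega> = c"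
  by (rule sigma_finite_subalgebra.real_cond_exp_F_meas[OF sigma_finite_subalgebra_past]) auto

lemma martingale_const: "martingale M I X (\<lambda>t \<omega>. c)"
  unfolding martingale_def using cond_exp_past_const by auto

lemma AE_poly_X_eq_0_imp_coeff_eq_0:
  assumes s: "s \<in> I" and ae: "AE \<omega> in M. (\<Sum>k\<le>n. c k * X s \<omega> ^ k) = 0" and k: "k \<le> n"
  shows "c k = 0"
proof (rule ccontr)
  assume "c k \<noteq> 0"
  then have fin: "finite {z. (\<Sum>i\<le>n. c i * z ^ i) = 0}" (is "finite ?R")
    using polyfun_roots_finite k by blast
  have "law_support M X s \<subseteq> ?R"
  proof
    fix x assume x: "x \<in> law_support M X s"
    show "x \<in> ?R"
    proof (rule ccontr)
      assume "x \<notin> ?R"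
      obtain e where e: "e > 0" "\<forall>r\<in>?R. r \<noteq> x \<longrightarrow> e \<le> dist x r"
        using finite_set_avoid[OF fin] by blast
      let ?S = "{\<omega> \<in> space M. \<bar>X s \<omega> - x\<bar> < e}"
      have S: "?S \<in> sets M"
        using borel_measurable_X[OF s] by measurable
      have "AE \<omega> in M. \<omega> \<notin> ?S"
        using ae
      proof eventually_elim
        case (elim \<omega>)
        then have "e \<le> dist x (X s \<omega>)"
          using e \<open>x \<notin> ?R\<close> by auto
        then show ?case
          by (auto simp: dist_real_def abs_minus_commute)
      qed
      then have "measure M ?S = 0"
        using AE_iff_null_sets[OF S] by (simp add: measure_def null_setsD1)
      moreover have "measure M ?S > 0"
        using x e unfolding law_support_def by auto
      ultimately show False by simp
    qed
  qed
  then show False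
    using standing s fin finite_subset unfolding standing_def by blast
qed

lemma mat_eq_if_AE_mult_Xvec_eq:
  fixes B C :: "real mat"
  assumes B: "B \<in> carrier_mat m (N+1)" and C: "C \<in> carrier_mat m (N+1)" and s: "s \<in> I"
    and eq: "\<And>i. i < m \<Longrightarrow> AE \<omega> in M. (B *\<^sub>v Xvec N X s \<omega>) $ i = (C *\<^sub>v Xvec N X s \<omega>) $ i"
  shows "B = C"
proof (rule eq_matI)
  fix i j assume "i < dim_row C" "j < dim_col C"
  then have i: "i < m" and j: "j \<le> N" using C by auto
  have "AE \<omega> in M. (\<Sum>k\<le>N. (B $$ (i,k) - C $$ (i,k)) * X s \<omega> ^ k) = 0"
    using eq[OF i] by eventually_elim
      (simp add: index_mult_Xvec[OF B i] index_mult_Xvec[OF C i] left_diff_distrib sum_subtractf)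
  from AE_poly_X_eq_0_imp_coeff_eq_0[OF s this j] show "B $$ (i,j) = C $$ (i,j)" by simp
qed (use B C in auto)

end

section \<open>Polynomial regression\<close>

lemma A_mat_carrier: "A_mat N \<gamma> s t \<in> carrier_mat (N+1) (N+1)"
  by (simp add: A_mat_def)

lemma index_A_mat:
  "i < N+1 \<Longrightarrow> j < N+1 \<Longrightarrow> A_mat N \<gamma> s t $$ (i,j) =
     (if i = 0 then (if j = 0 then 1 else 0) else if i < j then 0 else \<gamma> i j s t)"
  by (simp add: A_mat_def)

lemma lower_tri_A_mat: "lower_tri (A_mat N \<gamma> s t)"
  by (simp add: lower_tri_def A_mat_def)

locale polynomial_regression = standing_process +
  fixes N :: nat and \<gamma> :: "nat \<Rightarrow> nat \<Rightarrow> real \<Rightarrow> real \<Rightarrow> real"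
  assumes poly_reg: "poly_reg N M I X \<gamma>"
begin

lemma cond_exp_X_power:
  assumes s: "s \<in> I" and t: "t \<in> I" and st: "s \<le> t" and n: "n \<le> N"
  shows "AE \<omega> in M. real_cond_exp M (past M I X s) (\<lambda>\<omega>. X t \<omega> ^ n) \<omega>
                   = (A_mat N \<gamma> s t *\<^sub>v Xvec N X s \<omega>) $ n"
proof (cases "n = 0")
  case True
  have "(A_mat N \<gamma> s t *\<^sub>v Xvec N X s \<omega>) $ 0 = 1" for \<omega>
    using index_mult_lower_tri_vec[OF A_mat_carrier lower_tri_A_mat, of 0]
    by (simp add: Xvec_def index_A_mat)
  then show ?thesis
    using cond_exp_past_const[of s 1] True by simp
next
  case False
  have "(A_mat N \<gamma> s t *\<^sub>v Xvec N X s \<omega>) $ n = (\<Sum>k\<le>n. A_mat N \<gamma> s t $$ (n,k) * X s \<omega> ^ k)" for \<omega>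
    using index_mult_lower_tri_vec[OF A_mat_carrier lower_tri_A_mat, of n] n
    by (simp add: Xvec_def)
  also have "\<dots> \<omega> = (\<Sum>k\<le>n. \<gamma> n k s t * X s \<omega> ^ k)" for \<omega>
    by (rule sum.cong) (use False n in \<open>auto simp: index_A_mat\<close>)
  finally show ?thesis
    using poly_reg False n s t st unfolding poly_reg_def by auto
qed

lemma cond_exp_mult_Xvec:
  fixes B :: "real mat"
  assumes B: "B \<in> carrier_mat m (N+1)" and s: "s \<in> I" and t: "t \<in> I" and st: "s \<le> t"
    and i: "i < m"
  shows "AE \<omega> in M. real_cond_exp M (past M I X s) (\<lambda>\<omega>. (B *\<^sub>v Xvec N X t \<omega>) $ i) \<omega>
                   = (B * A_mat N \<gamma> s t *\<^sub>v Xvec N X s \<omega>) $ i"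
proof -
  interpret past: sigma_finite_subalgebra M "past M I X s"
    by (rule sigma_finite_subalgebra_past)
  let ?E = "real_cond_exp M (past M I X s)"
  have "AE \<omega> in M. ?E (\<lambda>\<omega>. (B *\<^sub>v Xvec N X t \<omega>) $ i) \<omega>
                   = (B *\<^sub>v vec (N+1) (\<lambda>k. ?E (\<lambda>\<omega>. X t \<omega> ^ k) \<omega>)) $ i"
    unfolding Xvec_def
    by (rule past.real_cond_exp_mult_mat_vec[OF B _ i]) (rule integrable_X_power[OF t])
  moreover have "AE \<omega> in M. \<forall>k\<in>{..<N+1}. ?E (\<lambda>\<omega>. X t \<omega> ^ k) \<omega> = (A_mat N \<gamma> s t *\<^sub>v Xvec N X s \<omega>) $ k"
    using s t st by (intro eventually_ball_finite) (auto intro: cond_exp_X_power)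
  ultimately show ?thesis
  proof eventually_elim
    case (elim \<omega>)
    then have "vec (N+1) (\<lambda>k. ?E (\<lambda>\<omega>. X t \<omega> ^ k) \<omega>) = A_mat N \<gamma> s t *\<^sub>v Xvec N X s \<omega>"
      by (intro eq_vecI) (auto simp: A_mat_def)
    with elim(1) show ?case
      by (simp add: assoc_mult_mat_vec[OF B A_mat_carrier Xvec_carrier])
  qed
qed

lemma A_mat_refl:
  assumes s: "s \<in> I"
  shows "A_mat N \<gamma> s s = 1\<^sub>m (N+1)"
proof (rule mat_eq_if_AE_mult_Xvec_eq[OF A_mat_carrier one_carrier_mat s])
  fix n assume n: "n < N+1"
  have [measurable]: "X s \<in> borel_measurable (past M I X s)"
    by (rule measurable_past[OF s order_refl])
  have "AE \<omega> in M. real_cond_exp M (past M I X s) (\<lambda>\<omega>. X s \<omega> ^ n) \<omega> = X s \<omega> ^ n"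
    by (rule sigma_finite_subalgebra.real_cond_exp_F_meas[OF sigma_finite_subalgebra_past
          integrable_X_power[OF s]]) measurable
  moreover have "AE \<omega> in M. real_cond_exp M (past M I X s) (\<lambda>\<omega>. X s \<omega> ^ n) \<omega>
                              = (A_mat N \<gamma> s s *\<^sub>v Xvec N X s \<omega>) $ n"
    using n by (intro cond_exp_X_power[OF s s order_refl]) auto
  ultimately show "AE \<omega> in M. (A_mat N \<gamma> s s *\<^sub>v Xvec N X s \<omega>) $ n = (1\<^sub>m (N+1) *\<^sub>v Xvec N X s \<omega>) $ n"
    by eventually_elim (use n in \<open>simp add: Xvec_def\<close>)
qed

lemma A_mat_cocycle:
  assumes s: "s \<in> I" and t: "t \<in> I" and u: "u \<in> I" and st: "s \<le> t" and tu: "t \<le> u"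
  shows "A_mat N \<gamma> s u = A_mat N \<gamma> t u * A_mat N \<gamma> s t"
proof (rule mat_eq_if_AE_mult_Xvec_eq[OF A_mat_carrier _ s])
  show "A_mat N \<gamma> t u * A_mat N \<gamma> s t \<in> carrier_mat (N+1) (N+1)"
    using A_mat_carrier by (rule mult_carrier_mat) (rule A_mat_carrier)
  fix n assume n: "n < N+1"
  let ?E = "real_cond_exp M (past M I X s)" and ?Et = "real_cond_exp M (past M I X t)"
  have sfs: "sigma_finite_subalgebra M (past M I X s)"
    by (rule sigma_finite_subalgebra_past)
  have "AE \<omega> in M. ?E (\<lambda>\<omega>. X u \<omega> ^ n) \<omega> = (A_mat N \<gamma> s u *\<^sub>v Xvec N X s \<omega>) $ n"
    using s u st tu n by (intro cond_exp_X_power) auto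
  moreover have "AE \<omega> in M. ?E (?Et (\<lambda>\<omega>. X u \<omega> ^ n)) \<omega> = ?E (\<lambda>\<omega>. X u \<omega> ^ n) \<omega>"
    by (rule sigma_finite_subalgebra.real_cond_exp_nested_subalg[OF sfs subalgebra_past
          subalgebra_past_mono[OF st] integrable_X_power[OF u]])
  moreover have "AE \<omega> in M. ?E (?Et (\<lambda>\<omega>. X u \<omega> ^ n)) \<omega> = ?E (\<lambda>\<omega>. (A_mat N \<gamma> t u *\<^sub>v Xvec N X t \<omega>) $ n) \<omega>"
  proof (rule sigma_finite_subalgebra.real_cond_exp_cong[OF sfs])
    show "AE \<omega> in M. ?Et (\<lambda>\<omega>. X u \<omega> ^ n) \<omega> = (A_mat N \<gamma> t u *\<^sub>v Xvec N X t \<omega>) $ n"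
      using t u tu n by (intro cond_exp_X_power) auto
    show "?Et (\<lambda>\<omega>. X u \<omega> ^ n) \<in> borel_measurable M"
      by (rule borel_measurable_cond_exp2)
    have [measurable]: "X t \<in> borel_measurable M"
      by (rule borel_measurable_X[OF t])
    show "(\<lambda>\<omega>. (A_mat N \<gamma> t u *\<^sub>v Xvec N X t \<omega>) $ n) \<in> borel_measurable M"
      unfolding index_mult_Xvec[OF A_mat_carrier n] by measurable
  qed
  moreover have "AE \<omega> in M. ?E (\<lambda>\<omega>. (A_mat N \<gamma> t u *\<^sub>v Xvec N X t \<omega>) $ n) \<omega>
                           = (A_mat N \<gamma> t u * A_mat N \<gamma> s t *\<^sub>v Xvec N X s \<omega>) $ n"
    by (rule cond_exp_mult_Xvec[OF A_mat_carrier s t st n])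
  ultimately show "AE \<omega> in M. (A_mat N \<gamma> s u *\<^sub>v Xvec N X s \<omega>) $ n
                            = (A_mat N \<gamma> t u * A_mat N \<gamma> s t *\<^sub>v Xvec N X s \<omega>) $ n"
    by eventually_elim simp
qed

lemma martingale_mult_Xvec:
  fixes B :: "real \<Rightarrow> real mat"
  assumes B: "\<And>t. t \<in> I \<Longrightarrow> B t \<in> carrier_mat m (N+1)"
    and BA: "\<And>s t. s \<in> I \<Longrightarrow> t \<in> I \<Longrightarrow> s \<le> t \<Longrightarrow> B t * A_mat N \<gamma> s t = B s"
    and i: "i < m"
  shows "martingale M I X (\<lambda>t \<omega>. (B t *\<^sub>v Xvec N X t \<omega>) $ i)"
  unfolding martingale_def
proof (intro conjI ballI impI)
  fix t assume t: "t \<in> I"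
  have [measurable]: "X t \<in> borel_measurable (past M I X t)"
    by (rule measurable_past[OF t order_refl])
  show "integrable M (\<lambda>\<omega>. (B t *\<^sub>v Xvec N X t \<omega>) $ i)"
    unfolding index_mult_Xvec[OF B[OF t] i] using integrable_X_power[OF t] by auto
  show "(\<lambda>\<omega>. (B t *\<^sub>v Xvec N X t \<omega>) $ i) \<in> borel_measurable (past M I X t)"
    unfolding index_mult_Xvec[OF B[OF t] i] by measurable
next
  fix s t assume s: "s \<in> I" and t: "t \<in> I" and st: "s \<le> t"
  show "AE \<omega> in M. real_cond_exp M (past M I X s) (\<lambda>\<omega>. (B t *\<^sub>v Xvec N X t \<omega>) $ i) \<omega>
                  = (B s *\<^sub>v Xvec N X s \<omega>) $ i"
    using cond_exp_mult_Xvec[OF B[OF t] s t st i] by (simp add: BA[OF s t st])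
qed

lemma cov_X_power_regression:
  assumes s: "s \<in> I" and t: "t \<in> I" and st: "s \<le> t" and a: "a \<le> N"
  shows "cov M (\<lambda>\<omega>. X t \<omega> ^ a) (\<lambda>\<omega>. X s \<omega> ^ b)
       = (\<Sum>k\<le>N. A_mat N \<gamma> s t $$ (a,k) * cov M (\<lambda>\<omega>. X s \<omega> ^ k) (\<lambda>\<omega>. X s \<omega> ^ b))"
proof -
  interpret past: sigma_finite_subalgebra M "past M I X s"
    by (rule sigma_finite_subalgebra_past)
  let ?A = "A_mat N \<gamma> s t" and ?E = "real_cond_exp M (past M I X s)"
  have [measurable]: "X s \<in> borel_measurable (past M I X s)"
    by (rule measurable_past[OF s order_refl])
  have [measurable]: "X s \<in> borel_measurable M" "X t \<in> borel_measurable M"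
    by (rule borel_measurable_X[OF s], rule borel_measurable_X[OF t])
  have reg: "AE \<omega> in M. ?E (\<lambda>\<omega>. X t \<omega> ^ a) \<omega> = (\<Sum>k\<le>N. ?A $$ (a,k) * X s \<omega> ^ k)"
    using cond_exp_X_power[OF s t st a] a by (simp add: index_mult_Xvec[OF A_mat_carrier])
  have mixed: "(\<integral>\<omega>. X t \<omega> ^ a * X s \<omega> ^ b \<partial>M)
             = (\<Sum>k\<le>N. ?A $$ (a,k) * (\<integral>\<omega>. X s \<omega> ^ k * X s \<omega> ^ b \<partial>M))"
  proof -
    have "(\<integral>\<omega>. X t \<omega> ^ a * X s \<omega> ^ b \<partial>M) = (\<integral>\<omega>. X s \<omega> ^ b * ?E (\<lambda>\<omega>. X t \<omega> ^ a) \<omega> \<partial>M)"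
      using past.real_cond_exp_intg(2)[of "\<lambda>\<omega>. X s \<omega> ^ b" "\<lambda>\<omega>. X t \<omega> ^ a"]
        integrable_X_power_mult[OF s t, of b a] by (simp add: mult.commute)
    also have "\<dots> = (\<integral>\<omega>. X s \<omega> ^ b * (\<Sum>k\<le>N. ?A $$ (a,k) * X s \<omega> ^ k) \<partial>M)"
      by (rule integral_cong_AE) (use reg in auto)
    also have "\<dots> = (\<integral>\<omega>. (\<Sum>k\<le>N. ?A $$ (a,k) * (X s \<omega> ^ k * X s \<omega> ^ b)) \<partial>M)"
      by (rule Bochner_Integration.integral_cong) (auto simp: sum_distrib_left algebra_simps)
    also have "\<dots> = (\<Sum>k\<le>N. ?A $$ (a,k) * (\<integral>\<omega>. X s \<omega> ^ k * X s \<omega> ^ b \<partial>M))"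
      using integrable_X_power_mult[OF s s] by simp
    finally show ?thesis .
  qed
  have single: "(\<integral>\<omega>. X t \<omega> ^ a \<partial>M) = (\<Sum>k\<le>N. ?A $$ (a,k) * (\<integral>\<omega>. X s \<omega> ^ k \<partial>M))"
  proof -
    have "(\<integral>\<omega>. X t \<omega> ^ a \<partial>M) = (\<integral>\<omega>. ?E (\<lambda>\<omega>. X t \<omega> ^ a) \<omega> \<partial>M)"
      using past.real_cond_exp_int(2)[OF integrable_X_power[OF t]] by simp
    also have "\<dots> = (\<integral>\<omega>. (\<Sum>k\<le>N. ?A $$ (a,k) * X s \<omega> ^ k) \<partial>M)"
      by (rule integral_cong_AE) (use reg in auto)
    also have "\<dots> = (\<Sum>k\<le>N. ?A $$ (a,k) * (\<integral>\<omega>. X s \<omega> ^ k \<partial>M))"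
      using integrable_X_power[OF s] by simp
    finally show ?thesis .
  qed
  show ?thesis
    unfolding cov_def mixed single
    by (simp only: right_diff_distrib sum_subtractf sum_distrib_right mult.assoc)
qed

lemma A_mat_diag_nonzero:
  assumes tli: "TLI N M I X" and s: "s \<in> I" and t: "t \<in> I" and st: "s < t"
    and n: "1 \<le> n" "n \<le> N"
  shows "A_mat N \<gamma> s t $$ (n,n) \<noteq> 0"
proof -
  let ?A = "A_mat N \<gamma> s t"
  define G where "G = mat n n (\<lambda>(i,k). ?A $$ (i+1,k+1))"
  define C where "C = mat n n (\<lambda>(k,j). cov M (\<lambda>\<omega>. X s \<omega> ^ (k+1)) (\<lambda>\<omega>. X s \<omega> ^ (j+1)))"
  define D where "D = mat n n (\<lambda>(i,j). cov M (\<lambda>\<omega>. X t \<omega> ^ (i+1)) (\<lambda>\<omega>. X s \<omega> ^ (j+1)))"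
  have G: "G \<in> carrier_mat n n" and C: "C \<in> carrier_mat n n"
    by (auto simp: G_def C_def)
  have "D = G * C"
  proof (rule eq_matI)
    fix i j assume "i < dim_row (G * C)" "j < dim_col (G * C)"
    then have i: "i < n" and j: "j < n" using G C by auto
    let ?f = "\<lambda>k. ?A $$ (i+1,k) * cov M (\<lambda>\<omega>. X s \<omega> ^ k) (\<lambda>\<omega>. X s \<omega> ^ (j+1))"
    have "D $$ (i,j) = (\<Sum>k\<le>N. ?f k)"
      using cov_X_power_regression[OF s t, of "i+1" "j+1"] st i j n by (simp add: D_def)
    also have "\<dots> = (\<Sum>k<N. ?f (Suc k))"
      \<comment> \<open>covariances with the constant X_s^0 vanish\<close>
      by (simp add: sum.atMost_shift cov_def prob_space)
    also have "\<dots> = (\<Sum>k<n. ?f (Suc k))"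
      by (rule sum.mono_neutral_right) (use i n in \<open>auto simp: index_A_mat\<close>)
    also have "\<dots> = (G * C) $$ (i,j)"
      by (subst index_mult_mat_sum[OF G C i j]) (auto simp: G_def C_def i j intro!: sum.cong)
    finally show "D $$ (i,j) = (G * C) $$ (i,j)" .
  qed (auto simp: D_def G_def C_def)
  moreover have "det D \<noteq> 0"
    using tli n s t st unfolding TLI_def D_def by auto
  ultimately have "det G \<noteq> 0"
    using det_mult[OF G C] by auto
  moreover have "lower_tri G"
    using n by (auto simp: lower_tri_def G_def index_A_mat)
  ultimately have "G $$ (n-1,n-1) \<noteq> 0"
    using det_lower_tri_nonzero_iff[OF G] n by auto
  then show ?thesis
    using n by (simp add: G_def)
qed

lemma det_A_mat_nonzero:
  assumes tli: "TLI N M I X" and s: "s \<in> I" and t: "t \<in> I" and st: "s \<le> t"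
  shows "det (A_mat N \<gamma> s t) \<noteq> 0"
proof (cases "s = t")
  case True
  then show ?thesis using A_mat_refl[OF s] by simp
next
  case False
  have "A_mat N \<gamma> s t $$ (i,i) \<noteq> 0" if "i < N+1" for i
    using A_mat_diag_nonzero[OF tli s t, of i] False st that
    by (cases "i = 0") (auto simp: index_A_mat)
  then show ?thesis
    using det_lower_tri_nonzero_iff[OF A_mat_carrier lower_tri_A_mat] by blast
qed

lemma exists_structural_matrix:
  assumes tli: "TLI N M I X"
  shows "\<exists>V. structural_matrix N M I X V"
  using cocycle_factorization[where A = "A_mat N \<gamma>" and I = I,
      OF A_mat_carrier lower_tri_A_mat det_A_mat_nonzero[OF tli] A_mat_cocycle]
    poly_reg by (auto simp: structural_matrix_def)

end

section \<open>Martingales and structural matrices\<close>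

context standing_process
begin

lemma polynomial_regressionI:
  "poly_reg N M I X \<gamma> \<Longrightarrow> polynomial_regression M I X N \<gamma>"
  by (intro polynomial_regression.intro polynomial_regression_axioms.intro standing_process_axioms)

lemma structural_matrix_inverse_martingale:
  assumes sm: "structural_matrix N M I X V" and i: "i \<le> N"
  shows "martingale M I X (\<lambda>t \<omega>. (minv (V t) *\<^sub>v Xvec N X t \<omega>) $ i)"
proof -
  from sm obtain \<gamma> where pr: "poly_reg N M I X \<gamma>"
    and AV: "\<And>s u. s \<in> I \<Longrightarrow> u \<in> I \<Longrightarrow> s \<le> u \<Longrightarrow> A_mat N \<gamma> s u = V u * minv (V s)"
    and fam: "nonsing_lt_family N I V"
    unfolding structural_matrix_def by blast
  interpret polynomial_regression M I X N \<gamma>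
    by (rule polynomial_regressionI[OF pr])
  have V: "V t \<in> carrier_mat (N+1) (N+1)" "det (V t) \<noteq> 0" if "t \<in> I" for t
    using fam that unfolding nonsing_lt_family_def by auto
  show ?thesis
  proof (rule martingale_mult_Xvec)
    show "minv (V t) \<in> carrier_mat (N+1) (N+1)" if "t \<in> I" for t
      using minv_carrier_mat[OF V[OF that]] .
    show "minv (V t) * A_mat N \<gamma> s t = minv (V s)" if "s \<in> I" "t \<in> I" "s \<le> t" for s t
      using AV[OF that] minv_mult_cancel_left[OF V[OF that(2)] minv_carrier_mat[OF V[OF that(1)]]]
      by simp
  qed (use i in simp)
qed

lemma martingales_cond_exp_Xvec:
  assumes fam: "nonsing_lt_family N I W"
    and mart: "\<forall>i\<le>N. martingale M I X (\<lambda>t \<omega>. (W t *\<^sub>v Xvec N X t \<omega>) $ i)"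
    and s: "s \<in> I" and t: "t \<in> I" and st: "s \<le> t" and i: "i \<le> N"
  shows "AE \<omega> in M. real_cond_exp M (past M I X s) (\<lambda>\<omega>. Xvec N X t \<omega> $ i) \<omega>
                   = (minv (W t) * W s *\<^sub>v Xvec N X s \<omega>) $ i"
proof -
  interpret past: sigma_finite_subalgebra M "past M I X s"
    by (rule sigma_finite_subalgebra_past)
  let ?E = "real_cond_exp M (past M I X s)"
  have W: "W u \<in> carrier_mat (N+1) (N+1)" "det (W u) \<noteq> 0" if "u \<in> I" for u
    using fam that unfolding nonsing_lt_family_def by auto
  have Wt_inv: "minv (W t) \<in> carrier_mat (N+1) (N+1)"
    by (rule minv_carrier_mat[OF W[OF t]])
  define Y where "Y j = (\<lambda>\<omega>. (W t *\<^sub>v Xvec N X t \<omega>) $ j)" for j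
  have "Xvec N X t \<omega> = minv (W t) *\<^sub>v (W t *\<^sub>v Xvec N X t \<omega>)" for \<omega>
    using assoc_mult_mat_vec[OF Wt_inv W(1)[OF t] Xvec_carrier[of N X t \<omega>]]
      mult_minv_left[OF W[OF t]] Xvec_carrier[of N X t \<omega>] by simp
  moreover have "W t *\<^sub>v Xvec N X t \<omega> = vec (N+1) (\<lambda>j. Y j \<omega>)" for \<omega>
    using W[OF t] by (intro eq_vecI) (auto simp: Y_def)
  ultimately have Xt: "(\<lambda>\<omega>. Xvec N X t \<omega> $ i) = (\<lambda>\<omega>. (minv (W t) *\<^sub>v vec (N+1) (\<lambda>j. Y j \<omega>)) $ i)"
    by simp
  have "AE \<omega> in M. ?E (\<lambda>\<omega>. (minv (W t) *\<^sub>v vec (N+1) (\<lambda>j. Y j \<omega>)) $ i) \<omega>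
                   = (minv (W t) *\<^sub>v vec (N+1) (\<lambda>j. ?E (Y j) \<omega>)) $ i"
    using mart t i by (intro past.real_cond_exp_mult_mat_vec[OF Wt_inv]) (auto simp: martingale_def Y_def)
  moreover have "AE \<omega> in M. \<forall>j\<in>{..<N+1}. ?E (Y j) \<omega> = (W s *\<^sub>v Xvec N X s \<omega>) $ j"
    using mart s t st by (intro eventually_ball_finite) (auto simp: martingale_def Y_def)
  ultimately show ?thesis
    unfolding Xt
  proof eventually_elim
    case (elim \<omega>)
    then have "vec (N+1) (\<lambda>j. ?E (Y j) \<omega>) = W s *\<^sub>v Xvec N X s \<omega>"
      using W[OF s] by (intro eq_vecI) auto
    with elim(1) show ?case
      by (simp add: assoc_mult_mat_vec[OF Wt_inv W(1)[OF s] Xvec_carrier])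
  qed
qed

lemma martingales_imp_MPR_structural_matrix:
  assumes markov: "markov M I X" and tli: "TLI N M I X" and msc: "MSC N M I X"
    and fam: "nonsing_lt_family N I W"
    and mart: "\<forall>i\<le>N. martingale M I X (\<lambda>t \<omega>. (W t *\<^sub>v Xvec N X t \<omega>) $ i)"
  shows "MPR N M I X \<and> structural_matrix N M I X (\<lambda>t. minv (W t))"
proof -
  have W: "W u \<in> carrier_mat (N+1) (N+1)" "det (W u) \<noteq> 0" "lower_tri (W u)" if "u \<in> I" for u
    using fam that unfolding nonsing_lt_family_def by auto
  have Winv: "minv (W u) \<in> carrier_mat (N+1) (N+1)" "lower_tri (minv (W u))"
    if "u \<in> I" for u
    using minv_carrier_mat[OF W(1,2)[OF that]] lower_tri_minv[OF W(1,3,2)[OF that]] by auto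
  define B where "B s t = minv (W t) * W s" for s t
  have B: "B s t \<in> carrier_mat (N+1) (N+1)" "lower_tri (B s t)" if "s \<in> I" "t \<in> I" for s t
    using Winv[OF that(2)] W[OF that(1)] lower_tri_mult by (auto simp: B_def)
  define \<gamma> where "\<gamma> n k s t = B s t $$ (n,k)" for n k s t
  have reg: "AE \<omega> in M. real_cond_exp M (past M I X s) (\<lambda>\<omega>. X t \<omega> ^ n) \<omega>
                      = (\<Sum>k\<le>n. \<gamma> n k s t * X s \<omega> ^ k)"
    if s: "s \<in> I" and t: "t \<in> I" and st: "s \<le> t" and n: "n \<le> N" for s t n
    using martingales_cond_exp_Xvec[OF fam mart s t st n]
      index_mult_lower_tri_vec[OF B[OF s t], of n] n
    by (simp add: Xvec_def \<gamma>_def B_def)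
  then have pr: "poly_reg N M I X \<gamma>"
    unfolding poly_reg_def by auto
  have "\<gamma> 0 0 s t = 1" if "s \<in> I" "t \<in> I" "s \<le> t" for s t
  proof -
    have "AE \<omega> in M. \<gamma> 0 0 s t = 1"
      using reg[OF that le0] cond_exp_past_const[of s 1] by eventually_elim simp
    then show ?thesis by simp
  qed
  then have "A_mat N \<gamma> s u = B s u" if "s \<in> I" "u \<in> I" "s \<le> u" for s u
    using that B[OF that(1,2)] lower_triD[OF B(2) B(1), OF that(1,2)]
    by (intro eq_matI) (auto simp: index_A_mat \<gamma>_def A_mat_def)
  then have "A_mat N \<gamma> s u = minv (W u) * minv (minv (W s))" if "s \<in> I" "u \<in> I" "s \<le> u" for s u
    using that minv_minv[OF W(1,2)[OF that(1)]] by (simp add: B_def)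
  moreover have "nonsing_lt_family N I (\<lambda>t. minv (W t))"
    using Winv det_minv_nonzero[OF W(1,2)] by (auto simp: nonsing_lt_family_def)
  ultimately show ?thesis
    using markov tli msc pr by (auto simp: MPR_def structural_matrix_def)
qed

lemma MPR_imp_polynomial_martingales:
  assumes "MPR N M I X"
  shows "\<exists>c :: nat \<Rightarrow> nat \<Rightarrow> real \<Rightarrow> real.
           (\<forall>i\<in>{1..N}. \<forall>t\<in>I. c i i t \<noteq> 0) \<and>
           (\<forall>i\<in>{1..N}. martingale M I X (\<lambda>t \<omega>. \<Sum>k\<le>i. c i k t * X t \<omega> ^ k))"
proof -
  obtain \<gamma> where pr: "poly_reg N M I X \<gamma>" and tli: "TLI N M I X"
    using assms by (auto simp: MPR_def)
  interpret polynomial_regression M I X N \<gamma>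
    by (rule polynomial_regressionI[OF pr])
  obtain V where sm: "structural_matrix N M I X V"
    using exists_structural_matrix[OF tli] by blast
  have V: "V t \<in> carrier_mat (N+1) (N+1)" "lower_tri (V t)" "det (V t) \<noteq> 0" if "t \<in> I" for t
    using sm that unfolding structural_matrix_def nonsing_lt_family_def by auto
  have Vinv: "minv (V t) \<in> carrier_mat (N+1) (N+1)" "lower_tri (minv (V t))" "det (minv (V t)) \<noteq> 0"
    if "t \<in> I" for t
    using minv_carrier_mat[OF V(1,3)[OF that]] lower_tri_minv[OF V[OF that]]
      det_minv_nonzero[OF V(1,3)[OF that]] by auto
  show ?thesis
  proof (intro exI[of _ "\<lambda>i k t. minv (V t) $$ (i,k)"] conjI ballI)
    fix i t assume "i \<in> {1..N}" "t \<in> I"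
    then show "minv (V t) $$ (i,i) \<noteq> 0"
      using det_lower_tri_nonzero_iff[OF Vinv(1,2)] Vinv(3) by auto
  next
    fix i assume i: "i \<in> {1..N}"
    show "martingale M I X (\<lambda>t \<omega>. \<Sum>k\<le>i. minv (V t) $$ (i,k) * X t \<omega> ^ k)"
    proof (rule martingale_cong[OF structural_matrix_inverse_martingale[OF sm]])
      fix t \<omega> assume "t \<in> I"
      then show "(minv (V t) *\<^sub>v Xvec N X t \<omega>) $ i = (\<Sum>k\<le>i. minv (V t) $$ (i,k) * X t \<omega> ^ k)"
        using index_mult_lower_tri_vec[OF Vinv(1,2), of t i] i by (simp add: Xvec_def)
    qed (use i in auto)
  qed
qed

lemma polynomial_martingales_imp_MPR:
  fixes c :: "nat \<Rightarrow> nat \<Rightarrow> real \<Rightarrow> real"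
  assumes markov: "markov M I X" and tli: "TLI N M I X" and msc: "MSC N M I X"
    and diag: "\<forall>i\<in>{1..N}. \<forall>t\<in>I. c i i t \<noteq> 0"
    and mart: "\<forall>i\<in>{1..N}. martingale M I X (\<lambda>t \<omega>. \<Sum>k\<le>i. c i k t * X t \<omega> ^ k)"
  shows "MPR N M I X"
proof -
  \<comment> \<open>row 0 stands for the constant martingale 1\<close>
  define W where "W t = mat (N+1) (N+1)
      (\<lambda>(i,k). if i = 0 then (if k = 0 then 1 else 0) else if k \<le> i then c i k t else 0)" for t
  have W: "W t \<in> carrier_mat (N+1) (N+1)" "lower_tri (W t)" for t
    by (auto simp: W_def lower_tri_def)
  have "W t $$ (i,i) \<noteq> 0" if "t \<in> I" "i < N+1" for t i
    using diag that by (cases "i = 0") (auto simp: W_def)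
  then have "nonsing_lt_family N I W"
    unfolding nonsing_lt_family_def using W det_lower_tri_nonzero_iff[OF W] by blast
  moreover have "martingale M I X (\<lambda>t \<omega>. (W t *\<^sub>v Xvec N X t \<omega>) $ i)" if i: "i \<le> N" for i
  proof -
    have row: "(W t *\<^sub>v Xvec N X t \<omega>) $ i = (\<Sum>k\<le>i. W t $$ (i,k) * X t \<omega> ^ k)" for t \<omega>
      using index_mult_lower_tri_vec[OF W, of i] i by (simp add: Xvec_def)
    show ?thesis
    proof (cases "i = 0")
      case True
      show ?thesis
        by (rule martingale_cong[OF martingale_const[of 1]]) (simp only: row, simp add: True W_def)
    next
      case False
      show ?thesis
      proof (rule martingale_cong[OF mart[rule_format, of i]])
        show "i \<in> {1..N}"
          using i False by auto
        show "(\<Sum>k\<le>i. c i k t * X t \<omega> ^ k) = (W t *\<^sub>v Xvec N X t \<omega>) $ i" for t \<omega>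
          unfolding row using i False by (auto simp: W_def intro!: sum.cong)
      qed
    qed
  qed
  ultimately show ?thesis
    using martingales_imp_MPR_structural_matrix[OF markov tli msc] by blast
qed

end

theorem theorem1:
  fixes N :: nat and M :: "'a measure" and I :: "real set" and X :: "real \<Rightarrow> 'a \<Rightarrow> real"
  assumes "N \<ge> 1"
    and "standing M I X"
    and "markov M I X" and "TLI N M I X" and "MSC N M I X"
  shows
    "(MPR N M I X \<longleftrightarrow>
       (\<exists>c :: nat \<Rightarrow> nat \<Rightarrow> real \<Rightarrow> real.
          (\<forall>i\<in>{1..N}. \<forall>t\<in>I. c i i t \<noteq> 0) \<and>
          (\<forall>i\<in>{1..N}. martingale M I X (\<lambda>t \<omega>. \<Sum>k\<le>i. c i k t * X t \<omega> ^ k))))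
  \<and>
    (\<forall>V. MPR N M I X \<longrightarrow> structural_matrix N M I X V \<longrightarrow>
       (\<forall>i\<le>N. martingale M I X (\<lambda>t \<omega>. (minv (V t) *\<^sub>v Xvec N X t \<omega>) $ i)))
  \<and>
    (\<forall>W. nonsing_lt_family N I W \<longrightarrow>
     (\<forall>i\<le>N. martingale M I X (\<lambda>t \<omega>. (W t *\<^sub>v Xvec N X t \<omega>) $ i)) \<longrightarrow>
       (\<forall>s\<in>I. \<forall>t\<in>I. s \<le> t \<longrightarrow> (\<forall>i\<le>N. AE \<omega> in M.
          real_cond_exp M (past M I X s) (\<lambda>\<omega>. Xvec N X t \<omega> $ i) \<omega>
            = (minv (W t) * W s *\<^sub>v Xvec N X s \<omega>) $ i))
       \<and> MPR N M I X \<and> structural_matrix N M I X (\<lambda>t. minv (W t)))"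
proof -
  interpret standing_process M I X
    by (rule standing_process.intro) (rule assms(2))
  show ?thesis (is "(_ \<longleftrightarrow> ?poly) \<and> ?inverse \<and> ?converse")
  proof (intro conjI iffI)
    show ?poly if "MPR N M I X"
      using that by (rule MPR_imp_polynomial_martingales)
    show "MPR N M I X" if ?poly
      using that polynomial_martingales_imp_MPR[OF assms(3-5)] by blast
    show ?inverse
      using structural_matrix_inverse_martingale by blast
    show ?converse
      using martingales_cond_exp_Xvec martingales_imp_MPR_structural_matrix[OF assms(3-5)] by blast
  qed
qed

end
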